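(* Let $X\subset\mathbf{C}$ be a compact subset. The following conditions are equivalent: (1) there exists $f\in\mathcal{F}_0$ such that $X=f([0,1])$; (2) $0\in X$, there exists a real number $\alpha$ such that $X$ is symmetric with respect to the line $\mathrm{Re}(z)=\alpha$, and there exists a continuous function $f\colon[0,1]\to\mathbf{C}$ such that $X=f([0,1])$; (3) $0\in X$, there exists a real number $\alpha$ such that $X$ is symmetric with respect to the line $\mathrm{Re}(z)=\alpha$, and $X$ is connected and locally connected.
   Context: $\mathcal{F}_0$ denotes the set of all continuous functions $f\colon[0,1]\to\mathbf{C}$ such that $f(t)+\overline{f(1-t)}=f(1)$ for all $t\in[0,1]$. Symmetry of $X$ with respect to the line $\mathrm{Re}(z)=\alpha$ means $X$ is invariant under $z\mapsto 2\alpha-\bar z$. *)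

theory Defs
  imports "HOL-Analysis.Analysis"
begin

definition F0 :: "(real \<Rightarrow> complex) set" where
  "F0 = {f. continuous_on {0..1} f \<and>
            (\<forall>t\<in>{0..1}. f t + cnj (f (1 - t)) = f 1)}"

definition symmetric_wrt_line :: "complex set \<Rightarrow> real \<Rightarrow> bool" where
  "symmetric_wrt_line X \<alpha> \<longleftrightarrow> (\<lambda>z. 2 * complex_of_real \<alpha> - cnj z) ` X = X"

end

theory Submission
  imports Defs
begin

text \<open>
  If \<open>f \<in> F0\<close>, the functional equation at \<open>t = 1\<close> and \<open>t = 1/2\<close> gives \<open>f 0 = 0\<close> and
  \<open>f 1 = 2\<alpha>\<close> real, and then it says that the reflection in the line \<open>Re z = \<alpha>\<close> maps \<open>f t\<close> to
  \<open>f (1 - t)\<close>. Conversely, if \<open>X\<close> is a symmetric path image containing \<open>0\<close>, it also contains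
  the mirror image \<open>2\<alpha>\<close> of \<open>0\<close>, hence by connectedness a point \<open>p\<close> on the axis; run a path
  from \<open>0\<close> through all of \<open>X\<close> to \<open>p\<close> and then its mirror image backwards.

  The equivalence with connectedness and local connectedness is the Hahn-Mazurkiewicz theorem.
  For the hard direction, a compact locally connected set is uniformly locally connected, which
  yields finer and finer chains through \<open>X\<close>, each obtained from the previous one by replacing
  every point with a nearby block; the step functions on \<open>[0,1]\<close> read off from these chains
  converge uniformly to a continuous surjection.
\<close>

section \<open>Functions in \<open>F0\<close> and symmetric path images\<close>

definition line_reflection :: "real \<Rightarrow> complex \<Rightarrow> complex" where
  "line_reflection \<alpha> z = 2 * complex_of_real \<alpha> - cnj z"

lemma line_reflection_involution [simp]: "line_reflection \<alpha> (line_reflection \<alpha> z) = z"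
  by (simp add: line_reflection_def)

lemma continuous_line_reflection: "continuous_on S (line_reflection \<alpha>)"
  unfolding line_reflection_def by (intro continuous_intros)

lemma symmetric_wrt_line_iff:
  "symmetric_wrt_line X \<alpha> \<longleftrightarrow> (\<forall>z\<in>X. line_reflection \<alpha> z \<in> X)"
proof -
  have "symmetric_wrt_line X \<alpha> \<longleftrightarrow> line_reflection \<alpha> ` X = X"
    by (simp add: symmetric_wrt_line_def line_reflection_def[abs_def])
  also have "\<dots> \<longleftrightarrow> (\<forall>z\<in>X. line_reflection \<alpha> z \<in> X)"
    by (auto intro!: image_eqI[where x = "line_reflection \<alpha> _"])
  finally show ?thesis .
qed

lemma F0_at_0:
  assumes "f \<in> F0"
  shows "f 0 = 0"
proof -
  have "\<forall>t\<in>{0..1}. f t + cnj (f (1 - t)) = f 1" using assms by (simp add: F0_def)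
  then have "f 1 + cnj (f (1 - 1)) = f 1" by (rule bspec) simp
  then show ?thesis by simp
qed

lemma F0_image_symmetric:
  assumes "f \<in> F0"
  shows "symmetric_wrt_line (f ` {0..1}) (Re (f 1) / 2)"
proof -
  have eq: "f t + cnj (f (1 - t)) = f 1" if "t \<in> {0..1}" for t
    using assms that by (auto simp: F0_def)
  have "f (1/2) + cnj (f (1/2)) = f 1"
    using eq[of "1/2"] by simp
  then have "Im (f 1) = 0"
    by (metis complex_add_cnj Im_complex_of_real)
  then have real: "cnj (f 1) = f 1" "2 * complex_of_real (Re (f 1) / 2) = f 1"
    by (simp_all add: complex_eq_iff)
  have "line_reflection (Re (f 1) / 2) (f t) = f (1 - t)" if "t \<in> {0..1}" for t
  proof -
    have "cnj (f t) + f (1 - t) = f 1"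
      using arg_cong[where f = cnj, OF eq[OF that]] real(1) by simp
    then show ?thesis unfolding line_reflection_def real(2) by (simp add: algebra_simps)
  qed
  then show ?thesis
    unfolding symmetric_wrt_line_iff by force
qed

lemma path_image_reparametrized_endpoints:
  fixes g :: "real \<Rightarrow> 'a::topological_space"
  assumes "path g" "a \<in> path_image g" "b \<in> path_image g"
  obtains h where "path h" "path_image h = path_image g" "pathstart h = a" "pathfinish h = b"
proof -
  have "path_connected (path_image g)" using \<open>path g\<close> by (rule path_connected_path_image)
  then obtain p q
    where p: "path p" "path_image p \<subseteq> path_image g" "pathstart p = a" "pathfinish p = pathstart g"
      and q: "path q" "path_image q \<subseteq> path_image g" "pathstart q = pathfinish g" "pathfinish q = b"
    using assms unfolding path_connected_def
    by (metis pathstart_in_path_image pathfinish_in_path_image)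
  have "path (p +++ g +++ q)" "path_image (p +++ g +++ q) = path_image g"
    using p q \<open>path g\<close> by (auto simp: path_image_join)
  moreover have "pathstart (p +++ g +++ q) = a" "pathfinish (p +++ g +++ q) = b"
    using p q by simp_all
  ultimately show ?thesis by (rule that)
qed

lemma symmetric_connected_meets_axis:
  assumes "connected X" "0 \<in> X" "symmetric_wrt_line X \<alpha>"
  obtains p where "p \<in> X" "Re p = \<alpha>"
proof -
  have "complex_of_real (2 * \<alpha>) \<in> X"
    using assms(2,3) unfolding symmetric_wrt_line_iff line_reflection_def by force
  then have "\<exists>p\<in>X. p \<bullet> 1 = \<alpha>"
    using connected_ivt_component[OF \<open>connected X\<close> \<open>0 \<in> X\<close>, of "complex_of_real (2 * \<alpha>)" 1 \<alpha>]
      connected_ivt_component[OF \<open>connected X\<close> _ \<open>0 \<in> X\<close>, of "complex_of_real (2 * \<alpha>)" 1 \<alpha>]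
    by (cases "0 \<le> \<alpha>") auto
  then show ?thesis using that by auto
qed

lemma reflected_double_path_in_F0:
  assumes "path h" "pathstart h = 0" "Re (pathfinish h) = \<alpha>"
  shows "h +++ reversepath (line_reflection \<alpha> \<circ> h) \<in> F0"
    and "path_image (h +++ reversepath (line_reflection \<alpha> \<circ> h)) =
      path_image h \<union> line_reflection \<alpha> ` path_image h"
proof -
  define f where "f = h +++ reversepath (line_reflection \<alpha> \<circ> h)"
  have fixed: "line_reflection \<alpha> (pathfinish h) = pathfinish h"
    using assms(3) by (simp add: line_reflection_def complex_eq_iff)
  have "path (line_reflection \<alpha> \<circ> h)"
    using \<open>path h\<close> continuous_line_reflection by (rule path_continuous_image)
  moreover have "pathstart (reversepath (line_reflection \<alpha> \<circ> h)) = pathfinish h"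
    using fixed by (simp add: pathfinish_compose)
  ultimately have "path f" "path_image f = path_image h \<union> line_reflection \<alpha> ` path_image h"
    using \<open>path h\<close> unfolding f_def by (simp_all add: path_image_join path_image_compose)
  then show "path_image f = path_image h \<union> line_reflection \<alpha> ` path_image h" by blast
  have f1: "f 1 = 2 * complex_of_real \<alpha>"
    using assms(2)
    by (simp add: f_def joinpaths_def reversepath_def line_reflection_def pathstart_def)
  have "f t + cnj (f (1 - t)) = f 1" if "t \<in> {0..1}" for t
  proof (cases "t = 1/2")
    case True
    have "f (1/2) = pathfinish h" by (simp add: f_def joinpaths_def pathfinish_def)
    then show ?thesis unfolding True using f1 assms(3) by (simp add: complex_add_cnj complex_eq_iff)
  next
    case False
    then show ?thesis unfolding f1 unfolding f_def
      by (auto simp: joinpaths_def reversepath_def line_reflection_def algebra_simps)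
  qed
  with \<open>path f\<close> show "f \<in> F0" unfolding F0_def path_def by blast
qed

lemma symmetric_path_image_F0:
  assumes "path g" "0 \<in> path_image g" "symmetric_wrt_line (path_image g) \<alpha>"
  obtains f where "f \<in> F0" "f ` {0..1} = path_image g"
proof -
  obtain p where p: "p \<in> path_image g" "Re p = \<alpha>"
    using symmetric_connected_meets_axis[OF connected_path_image[OF \<open>path g\<close>] assms(2,3)] .
  obtain h where h: "path h" "path_image h = path_image g" "pathstart h = 0" "pathfinish h = p"
    using path_image_reparametrized_endpoints[OF \<open>path g\<close> assms(2) p(1)] .
  have "line_reflection \<alpha> ` path_image g \<subseteq> path_image g"
    using assms(3) unfolding symmetric_wrt_line_iff by blast
  then show ?thesis
    using reflected_double_path_in_F0[OF h(1,3), of \<alpha>] h(2,4) p(2) that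
    unfolding path_image_def by (metis sup.absorb1)
qed

lemma F0_image_iff:
  "(\<exists>f\<in>F0. X = f ` {0..1}) \<longleftrightarrow>
    0 \<in> X \<and> (\<exists>\<alpha>. symmetric_wrt_line X \<alpha>) \<and> (\<exists>g. continuous_on {0..1::real} g \<and> X = g ` {0..1})"
proof
  assume "\<exists>f\<in>F0. X = f ` {0..1}"
  then obtain f where f: "f \<in> F0" "X = f ` {0..1}" by blast
  then have "0 \<in> X" "symmetric_wrt_line X (Re (f 1) / 2)" "continuous_on {0..1} f"
    using F0_at_0[OF f(1)] F0_image_symmetric[OF f(1)] by (force simp: F0_def)+
  with f(2) show "0 \<in> X \<and> (\<exists>\<alpha>. symmetric_wrt_line X \<alpha>) \<and>
      (\<exists>g. continuous_on {0..1::real} g \<and> X = g ` {0..1})"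
    by blast
next
  assume "0 \<in> X \<and> (\<exists>\<alpha>. symmetric_wrt_line X \<alpha>) \<and>
    (\<exists>g. continuous_on {0..1::real} g \<and> X = g ` {0..1})"
  then obtain g \<alpha>
    where "path g" "0 \<in> path_image g" "symmetric_wrt_line (path_image g) \<alpha>" "X = path_image g"
    unfolding path_def path_image_def by blast
  then show "\<exists>f\<in>F0. X = f ` {0..1}"
    using symmetric_path_image_F0 by metis
qed

section \<open>The Hahn-Mazurkiewicz theorem\<close>

lemma successively_concat:
  assumes "\<forall>xs\<in>set xss. xs \<noteq> [] \<and> successively P xs"
    and "successively (\<lambda>xs ys. P (last xs) (hd ys)) xss"
  shows "successively P (concat xss)"
  using assms by (induction xss rule: induct_list012) (auto simp: successively_append_iff)

lemma nth_concat_equal_length: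
  assumes "\<forall>xs\<in>set xss. length xs = L" "j < length xss * L"
  shows "concat xss ! j = xss ! (j div L) ! (j mod L)"
  using assms
proof (induction xss arbitrary: j)
  case (Cons xs xss)
  show ?case
  proof (cases "j < L")
    case False
    then have "0 < L" "L \<le> j" using Cons.prems by auto
    then have "j div L = Suc ((j - L) div L)" "j mod L = (j - L) mod L"
      by (simp_all add: le_div_geq le_mod_geq)
    moreover have "j - L < length xss * L" using Cons.prems \<open>L \<le> j\<close> by auto
    ultimately show ?thesis
      using Cons False by (simp add: nth_append)
  qed (use Cons.prems in \<open>simp add: nth_append\<close>)
qed simp

definition d_chain :: "real \<Rightarrow> 'a::metric_space list \<Rightarrow> bool" where
  "d_chain d xs \<longleftrightarrow> xs \<noteq> [] \<and> successively (\<lambda>x y. dist x y < d) xs"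

lemma d_chain_append:
  assumes "d > 0" "d_chain d xs" "d_chain d ys" "last xs = hd ys"
  shows "d_chain d (xs @ ys)"
  using assms by (simp add: d_chain_def successively_append_iff)

lemma d_chain_pad:
  assumes "d > 0" "d_chain d xs" "last xs = y"
  shows "d_chain d (xs @ replicate k y)"
proof -
  have "successively (\<lambda>x y. dist x y < d) (replicate k y)"
    using \<open>d > 0\<close> by (simp add: successively_conv_nth)
  then show ?thesis
    using assms by (cases k) (auto simp: d_chain_def successively_append_iff)
qed

lemma connected_imp_d_chain:
  assumes "connected S" "d > 0" "x \<in> S" "y \<in> S"
  shows "\<exists>xs. d_chain d xs \<and> set xs \<subseteq> S \<and> hd xs = x \<and> last xs = y"
proof (rule connected_equivalence_relation[OF assms(1,3,4)])
  fix a b assume "\<exists>xs. d_chain d xs \<and> set xs \<subseteq> S \<and> hd xs = a \<and> last xs = b"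
  then obtain xs where "d_chain d xs \<and> set xs \<subseteq> S \<and> hd xs = a \<and> last xs = b" by blast
  then have "d_chain d (rev xs) \<and> set (rev xs) \<subseteq> S \<and> hd (rev xs) = b \<and> last (rev xs) = a"
    by (simp add: d_chain_def hd_rev last_rev dist_commute)
  then show "\<exists>xs. d_chain d xs \<and> set xs \<subseteq> S \<and> hd xs = b \<and> last xs = a" by blast
next
  fix a b c
  assume "\<exists>xs. d_chain d xs \<and> set xs \<subseteq> S \<and> hd xs = a \<and> last xs = b"
    and "\<exists>ys. d_chain d ys \<and> set ys \<subseteq> S \<and> hd ys = b \<and> last ys = c"
  then show "\<exists>xs. d_chain d xs \<and> set xs \<subseteq> S \<and> hd xs = a \<and> last xs = c"
    using d_chain_append[OF \<open>d > 0\<close>]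
    by (metis d_chain_def hd_append2 last_appendR set_append Un_subset_iff)
next
  fix a assume "a \<in> S"
  have "\<exists>xs. d_chain d xs \<and> set xs \<subseteq> S \<and> hd xs = a \<and> last xs = x"
    if "x \<in> S \<inter> ball a d" for x
    using that \<open>a \<in> S\<close> by (intro exI[of _ "[a, x]"]) (simp add: d_chain_def)
  then show "\<exists>T. openin (top_of_set S) T \<and> a \<in> T \<and>
      (\<forall>x\<in>T. \<exists>xs. d_chain d xs \<and> set xs \<subseteq> S \<and> hd xs = a \<and> last xs = x)"
    using \<open>a \<in> S\<close> \<open>d > 0\<close> by (intro exI[of _ "S \<inter> ball a d"]) (auto simp: openin_open_Int)
qed

lemma d_chain_concat_blocks:
  assumes "d > 0" "N > 0"
    and blocks: "\<And>i. i < N \<Longrightarrow> d_chain d (b i) \<and> length (b i) = L"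
    and linked: "\<And>i. Suc i < N \<Longrightarrow> last (b i) = hd (b (Suc i))"
  shows "d_chain d (concat (map b [0..<N]))" "length (concat (map b [0..<N])) = N * L"
    and "\<And>j. j < N * L \<Longrightarrow> concat (map b [0..<N]) ! j = b (j div L) ! (j mod L)"
proof -
  have "sum_list (map (length \<circ> b) [0..<N]) = sum_list (map (\<lambda>_. L) [0..<N])"
    using blocks by (intro arg_cong[where f = sum_list] map_cong) auto
  then show len: "length (concat (map b [0..<N])) = N * L"
    by (simp add: length_concat sum_list_triv)
  show "concat (map b [0..<N]) ! j = b (j div L) ! (j mod L)" if "j < N * L" for j
  proof -
    have "j div L < N" using that by (simp add: less_mult_imp_div_less)
    then show ?thesis
      using nth_concat_equal_length[of "map b [0..<N]" L j] blocks that by simp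
  qed
  have "successively (\<lambda>x y. dist x y < d) (concat (map b [0..<N]))"
  proof (rule successively_concat)
    show "\<forall>xs\<in>set (map b [0..<N]). xs \<noteq> [] \<and> successively (\<lambda>x y. dist x y < d) xs"
      using blocks by (auto simp: d_chain_def)
    show "successively (\<lambda>xs ys. dist (last xs) (hd ys) < d) (map b [0..<N])"
      using linked \<open>d > 0\<close> by (simp add: successively_conv_nth)
  qed
  moreover have "concat (map b [0..<N]) \<noteq> []"
    using blocks[of 0] \<open>N > 0\<close> by (auto simp: d_chain_def)
  ultimately show "d_chain d (concat (map b [0..<N]))"
    by (simp add: d_chain_def)
qed

definition uniformly_locally_connected_at :: "'a::metric_space set \<Rightarrow> real \<Rightarrow> real \<Rightarrow> bool" where
  "uniformly_locally_connected_at X e d \<longleftrightarrow>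
     (\<forall>x\<in>X. \<forall>y\<in>X. dist x y < d \<longrightarrow> (\<exists>C. connected C \<and> C \<subseteq> X \<inter> ball x e \<and> x \<in> C \<and> y \<in> C))"

lemma uniformly_locally_connected_at_mono:
  assumes "uniformly_locally_connected_at X e d" "d' \<le> d"
  shows "uniformly_locally_connected_at X e d'"
  using assms unfolding uniformly_locally_connected_at_def by force

lemma connected_uniformly_locally_connected_at:
  assumes "connected X" "\<forall>x\<in>X. \<forall>y\<in>X. dist x y < e"
  shows "uniformly_locally_connected_at X e d"
  using assms unfolding uniformly_locally_connected_at_def by (auto intro!: exI[of _ X])

lemma compact_locally_connected_imp_uniformly:
  assumes "compact X" "locally connected X" "e > 0"
  obtains d where "d > 0" "uniformly_locally_connected_at X e d"
proof -
  have "\<exists>U. openin (top_of_set X) U \<and> connected U \<and> z \<in> U \<and> U \<subseteq> X \<inter> ball z (e/2)"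
    if "z \<in> X" for z
  proof -
    have "openin (top_of_set X) (X \<inter> ball z (e/2))" "z \<in> X \<inter> ball z (e/2)"
      using that \<open>e > 0\<close> by (auto simp: openin_open_Int)
    then show ?thesis using assms(2) unfolding locally_connected by blast
  qed
  then obtain U where U: "\<And>z. z \<in> X \<Longrightarrow>
      openin (top_of_set X) (U z) \<and> connected (U z) \<and> z \<in> U z \<and> U z \<subseteq> X \<inter> ball z (e/2)"
    by metis
  then have "\<forall>z\<in>X. \<exists>W. open W \<and> U z = X \<inter> W" by (meson openin_open)
  then obtain W where W: "\<And>z. z \<in> X \<Longrightarrow> open (W z) \<and> U z = X \<inter> W z" by metis
  have "X \<subseteq> \<Union> (W ` X)" using U W by blast
  then obtain d where "d > 0" and d: "\<And>x. x \<in> X \<Longrightarrow> \<exists>G \<in> W ` X. ball x d \<subseteq> G"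
    using Heine_Borel_lemma[OF \<open>compact X\<close>] W by blast
  have "\<exists>C. connected C \<and> C \<subseteq> X \<inter> ball x e \<and> x \<in> C \<and> y \<in> C"
    if "x \<in> X" "y \<in> X" "dist x y < d" for x y
  proof -
    obtain z where z: "z \<in> X" "ball x d \<subseteq> W z" using d \<open>x \<in> X\<close> by blast
    then have "x \<in> U z" "y \<in> U z" using that W \<open>d > 0\<close> by auto
    moreover have "U z \<subseteq> ball x e"
    proof
      fix w assume "w \<in> U z"
      then have "dist x z < e/2" "dist w z < e/2"
        using U[OF z(1)] \<open>x \<in> U z\<close> by (auto simp: dist_commute)
      then show "w \<in> ball x e" using dist_triangle_half_l by auto
    qed
    ultimately show ?thesis using U[OF z(1)] by blast
  qed
  then have "uniformly_locally_connected_at X e d"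
    unfolding uniformly_locally_connected_at_def by blast
  with \<open>d > 0\<close> show ?thesis by (rule that)
qed

lemma d_chain_through_finite:
  assumes ulc: "uniformly_locally_connected_at X e \<delta>" and "d > 0"
    and "c \<in> X" "y \<in> X" "dist c y < \<delta>"
    and "finite F" "F \<subseteq> X \<inter> ball c \<delta>"
  shows "\<exists>xs. d_chain d xs \<and> set xs \<subseteq> X \<inter> ball c e \<and> hd xs = c \<and> last xs = y \<and> F \<subseteq> set xs"
  using \<open>finite F\<close> \<open>F \<subseteq> X \<inter> ball c \<delta>\<close>
proof (induction F rule: finite_induct)
  case empty
  obtain C where C: "connected C" "C \<subseteq> X \<inter> ball c e" "c \<in> C" "y \<in> C"
    using ulc assms(3-5) unfolding uniformly_locally_connected_at_def by blast
  then obtain xs where "d_chain d xs" "set xs \<subseteq> C" "hd xs = c" "last xs = y"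
    using connected_imp_d_chain[OF C(1) \<open>d > 0\<close> C(3,4)] by blast
  with C(2) show ?case by blast
next
  case (insert f F)
  \<comment> \<open>extend the chain by a detour from \<open>c\<close> to \<open>f\<close> and back inside a small connected set\<close>
  then obtain xs
    where xs: "d_chain d xs" "set xs \<subseteq> X \<inter> ball c e" "hd xs = c" "last xs = y" "F \<subseteq> set xs"
    by blast
  have "f \<in> X" "dist c f < \<delta>" using insert.prems by auto
  then obtain C where C: "connected C" "C \<subseteq> X \<inter> ball c e" "c \<in> C" "f \<in> C"
    using ulc \<open>c \<in> X\<close> unfolding uniformly_locally_connected_at_def by blast
  obtain ys where ys: "d_chain d ys" "set ys \<subseteq> C" "hd ys = c" "last ys = f"
    using connected_imp_d_chain[OF C(1) \<open>d > 0\<close> C(3,4)] by blast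
  obtain zs where zs: "d_chain d zs" "set zs \<subseteq> C" "hd zs = f" "last zs = c"
    using connected_imp_d_chain[OF C(1) \<open>d > 0\<close> C(4,3)] by blast
  have "d_chain d (zs @ xs)"
    using d_chain_append[OF \<open>d > 0\<close> zs(1) xs(1)] zs xs by simp
  then have "d_chain d (ys @ zs @ xs)"
    using d_chain_append[OF \<open>d > 0\<close> ys(1)] ys zs by (simp add: d_chain_def)
  moreover have "hd (ys @ zs @ xs) = c" "last (ys @ zs @ xs) = y"
    using xs ys zs by (simp_all add: d_chain_def)
  moreover have "set (ys @ zs @ xs) \<subseteq> X \<inter> ball c e"
    using xs(2) ys(2) zs(2) C(2) by auto
  moreover have "f \<in> set ys"
    using ys last_in_set unfolding d_chain_def by metis
  then have "insert f F \<subseteq> set (ys @ zs @ xs)"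
    using xs(5) by auto
  ultimately show ?case by blast
qed

definition dense_chain :: "'a::metric_space set \<Rightarrow> real \<Rightarrow> 'a list \<Rightarrow> bool" where
  "dense_chain X d xs \<longleftrightarrow> d_chain d xs \<and> set xs \<subseteq> X \<and> (\<forall>x\<in>X. \<exists>y\<in>set xs. dist x y < d)"

lemma dense_chain_mono:
  assumes "dense_chain X d xs" "d \<le> d'"
  shows "dense_chain X d' xs"
proof -
  have "successively (\<lambda>x y. dist x y < d') xs"
    using assms successively_mono[of "\<lambda>x y. dist x y < d" xs]
    unfolding dense_chain_def d_chain_def by auto
  moreover have "\<forall>x\<in>X. \<exists>y\<in>set xs. dist x y < d'"
    using assms unfolding dense_chain_def by (meson less_le_trans)
  ultimately show ?thesis using assms(1) unfolding dense_chain_def d_chain_def by blast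
qed

definition blockwise_refines :: "real \<Rightarrow> 'a::metric_space list \<Rightarrow> 'a list \<Rightarrow> bool" where
  "blockwise_refines e ys xs \<longleftrightarrow>
     (\<exists>L\<ge>1. length ys = length xs * L \<and> (\<forall>j<length ys. dist (ys ! j) (xs ! (j div L)) < e))"

lemma d_chain_concat_padded:
  assumes "d > 0" "N > 0"
    and chains: "\<And>i. i < N \<Longrightarrow> d_chain d (zs i)"
    and linked: "\<And>i. Suc i < N \<Longrightarrow> last (zs i) = hd (zs (Suc i))"
  obtains L ys where "L \<ge> 1" "d_chain d ys" "length ys = N * L" "set ys = (\<Union>i<N. set (zs i))"
    and "\<And>j. j < N * L \<Longrightarrow> ys ! j \<in> set (zs (j div L))"
proof -
  define L where "L = Max ((length \<circ> zs) ` {..<N})"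
  have len_zs: "length (zs i) \<le> L" if "i < N" for i
    unfolding L_def using that by (auto intro: Max_ge)
  have "0 < length (zs 0)" using chains[of 0] \<open>N > 0\<close> by (simp add: d_chain_def)
  then have "L \<ge> 1" using len_zs[of 0] \<open>N > 0\<close> by linarith
  define block where "block i = zs i @ replicate (L - length (zs i)) (last (zs i))" for i
  have block: "d_chain d (block i) \<and> length (block i) = L" if "i < N" for i
    using d_chain_pad[OF \<open>d > 0\<close> chains[OF that]] len_zs[OF that] unfolding block_def by auto
  have set_block: "set (block i) = set (zs i)" if "i < N" for i
    using chains[OF that] last_in_set[of "zs i"] unfolding block_def d_chain_def by auto
  have linked_blocks: "last (block i) = hd (block (Suc i))" if "Suc i < N" for i
    using chains[of i] chains[of "Suc i"] linked[OF that] that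
    unfolding block_def d_chain_def by (auto simp: last_append)
  note ys = d_chain_concat_blocks[of d N block L, OF \<open>d > 0\<close> \<open>N > 0\<close> block linked_blocks]
  have "concat (map block [0..<N]) ! j \<in> set (zs (j div L))" if "j < N * L" for j
  proof -
    have "j div L < N" "j mod L < L"
      using that \<open>L \<ge> 1\<close> by (auto simp: less_mult_imp_div_less)
    moreover have "concat (map block [0..<N]) ! j = block (j div L) ! (j mod L)"
      using ys(3) that by blast
    ultimately show ?thesis using block set_block by (metis nth_mem)
  qed
  moreover have "set (concat (map block [0..<N])) = (\<Union>i<N. set (zs i))"
    using set_block by auto
  ultimately show ?thesis using that \<open>L \<ge> 1\<close> ys(1,2) by blast
qed

lemma dense_chain_local_chains:
  assumes "dense_chain X \<delta> xs" "uniformly_locally_connected_at X e \<delta>" "d > 0" "finite F" "F \<subseteq> X"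
  obtains zs where "\<And>i. i < length xs \<Longrightarrow>
      d_chain d (zs i) \<and> set (zs i) \<subseteq> X \<inter> ball (xs ! i) e \<and> F \<inter> ball (xs ! i) \<delta> \<subseteq> set (zs i)"
    and "\<And>i. Suc i < length xs \<Longrightarrow> last (zs i) = hd (zs (Suc i))"
proof -
  define N where "N = length xs"
  have "N > 0" "set xs \<subseteq> X" and xs_dense: "\<forall>x\<in>X. \<exists>y\<in>set xs. dist x y < \<delta>"
    and xs_step: "\<And>i. Suc i < N \<Longrightarrow> dist (xs ! i) (xs ! Suc i) < \<delta>"
    using assms(1) successively_nth by (auto simp: dense_chain_def d_chain_def N_def)
  have "xs ! 0 \<in> X" using \<open>N > 0\<close> \<open>set xs \<subseteq> X\<close> unfolding N_def by auto
  then obtain y where "dist (xs ! 0) y < \<delta>" using xs_dense by blast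
  then have "\<delta> > 0" using zero_le_dist[of "xs ! 0" y] by linarith
  define next_pt where "next_pt i = xs ! min (Suc i) (N - 1)" for i
  have next_pt: "next_pt i \<in> X" "dist (xs ! i) (next_pt i) < \<delta>" if "i < N" for i
  proof -
    show "next_pt i \<in> X" using that \<open>set xs \<subseteq> X\<close> unfolding next_pt_def N_def by auto
    show "dist (xs ! i) (next_pt i) < \<delta>"
    proof (cases "Suc i < N")
      case False
      then have "min (Suc i) (N - 1) = i" using that by simp
      then show ?thesis unfolding next_pt_def using \<open>\<delta> > 0\<close> by simp
    qed (simp add: next_pt_def xs_step)
  qed
  have "\<exists>zs. d_chain d zs \<and> set zs \<subseteq> X \<inter> ball (xs ! i) e \<and> hd zs = xs ! i \<and>
      last zs = next_pt i \<and> F \<inter> ball (xs ! i) \<delta> \<subseteq> set zs" if "i < N" for i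
  proof (rule d_chain_through_finite[OF assms(2,3) _ next_pt[OF that]])
    show "xs ! i \<in> X" using that \<open>set xs \<subseteq> X\<close> unfolding N_def by auto
    show "finite (F \<inter> ball (xs ! i) \<delta>)" "F \<inter> ball (xs ! i) \<delta> \<subseteq> X \<inter> ball (xs ! i) \<delta>"
      using assms(4,5) by auto
  qed
  then obtain zs where zs: "\<And>i. i < N \<Longrightarrow> d_chain d (zs i) \<and> set (zs i) \<subseteq> X \<inter> ball (xs ! i) e \<and>
      hd (zs i) = xs ! i \<and> last (zs i) = next_pt i \<and> F \<inter> ball (xs ! i) \<delta> \<subseteq> set (zs i)"
    by metis
  have "last (zs i) = hd (zs (Suc i))" if "Suc i < N" for i
    using zs[of i] zs[of "Suc i"] that unfolding next_pt_def by auto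
  with zs that show ?thesis unfolding N_def by blast
qed

lemma dense_chain_refine:
  assumes "compact X" "dense_chain X \<delta> xs" "uniformly_locally_connected_at X e \<delta>" "d > 0"
  obtains ys where "dense_chain X d ys" "blockwise_refines e ys xs"
proof -
  obtain F where F: "F \<subseteq> X" "finite F" "X \<subseteq> (\<Union>f\<in>F. ball f d)"
  proof (rule compactE_image[OF \<open>compact X\<close>, of X "\<lambda>f. ball f d"])
    show "X \<subseteq> (\<Union>f\<in>X. ball f d)" using \<open>d > 0\<close> by force
  qed auto
  obtain zs where zs: "\<And>i. i < length xs \<Longrightarrow>
      d_chain d (zs i) \<and> set (zs i) \<subseteq> X \<inter> ball (xs ! i) e \<and> F \<inter> ball (xs ! i) \<delta> \<subseteq> set (zs i)"
    and linked: "\<And>i. Suc i < length xs \<Longrightarrow> last (zs i) = hd (zs (Suc i))"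
    using dense_chain_local_chains[OF assms(2-4) F(2,1)] by blast
  have "length xs > 0" using assms(2) by (simp add: dense_chain_def d_chain_def)
  then obtain L ys where "L \<ge> 1" "d_chain d ys" "length ys = length xs * L"
    and set_ys: "set ys = (\<Union>i<length xs. set (zs i))"
    and ys: "\<And>j. j < length xs * L \<Longrightarrow> ys ! j \<in> set (zs (j div L))"
    using d_chain_concat_padded[OF \<open>d > 0\<close>, of "length xs" zs] zs linked by blast
  have "\<exists>y\<in>set ys. dist x y < d" if "x \<in> X" for x
  proof -
    obtain f where "f \<in> F" "dist x f < d" using F(3) \<open>x \<in> X\<close> by (auto simp: dist_commute)
    moreover obtain y where "y \<in> set xs" "dist f y < \<delta>"
      using assms(2) F(1) \<open>f \<in> F\<close> unfolding dense_chain_def by blast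
    then obtain i where "i < length xs" "f \<in> F \<inter> ball (xs ! i) \<delta>"
      using \<open>f \<in> F\<close> by (auto simp: in_set_conv_nth dist_commute)
    ultimately show ?thesis using zs set_ys by blast
  qed
  then have "dense_chain X d ys"
    using \<open>d_chain d ys\<close> set_ys zs unfolding dense_chain_def by blast
  moreover have "dist (ys ! j) (xs ! (j div L)) < e" if "j < length ys" for j
  proof -
    have "j div L < length xs" using that \<open>length ys = length xs * L\<close>
      by (simp add: less_mult_imp_div_less)
    then show ?thesis
      using ys zs that \<open>length ys = length xs * L\<close> by (fastforce simp: dist_commute)
  qed
  then have "blockwise_refines e ys xs"
    using \<open>L \<ge> 1\<close> \<open>length ys = length xs * L\<close> unfolding blockwise_refines_def by blast
  ultimately show ?thesis by (rule that)
qed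

lemma refining_dense_chains:
  fixes X :: "'a::metric_space set"
  assumes "compact X" "connected X" "locally connected X" "x0 \<in> X"
    and eps: "\<And>n. eps n > 0" and diam: "\<forall>x\<in>X. \<forall>y\<in>X. dist x y < eps 0"
  obtains cs where "\<And>n. dense_chain X (eps n) (cs n)"
    and "\<And>n. blockwise_refines (eps n) (cs (Suc n)) (cs n)"
proof -
  have "\<exists>\<delta>. 0 < \<delta> \<and> \<delta> \<le> eps n \<and> uniformly_locally_connected_at X (eps n) \<delta> \<and> (n = 0 \<longrightarrow> \<delta> = eps 0)"
    for n
  proof (cases "n = 0")
    case True
    then show ?thesis
      using eps connected_uniformly_locally_connected_at[OF \<open>connected X\<close> diam] by auto
  next
    case False
    obtain \<delta> where "\<delta> > 0" "uniformly_locally_connected_at X (eps n) \<delta>"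
      using compact_locally_connected_imp_uniformly[OF assms(1,3) eps] .
    then show ?thesis
      using False eps[of n] uniformly_locally_connected_at_mono[of X "eps n" \<delta> "min \<delta> (eps n)"]
      by (intro exI[of _ "min \<delta> (eps n)"]) auto
  qed
  then obtain D
    where D: "\<And>n. 0 < D n \<and> D n \<le> eps n \<and> uniformly_locally_connected_at X (eps n) (D n)"
      and D0: "D 0 = eps 0"
    by metis
  have "\<exists>cs. \<forall>n. dense_chain X (D n) (cs n) \<and> blockwise_refines (eps n) (cs (Suc n)) (cs n)"
  proof (rule dependent_nat_choice)
    show "\<exists>xs. dense_chain X (D 0) xs"
      using \<open>x0 \<in> X\<close> diam D0 by (intro exI[of _ "[x0]"]) (auto simp: dense_chain_def d_chain_def)
    fix xs n assume "dense_chain X (D n) xs"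
    then obtain ys where "dense_chain X (D (Suc n)) ys" "blockwise_refines (eps n) ys xs"
      using dense_chain_refine[OF \<open>compact X\<close> _ _ conjunct1[OF D]] D by blast
    then show "\<exists>ys. dense_chain X (D (Suc n)) ys \<and> blockwise_refines (eps n) ys xs" by blast
  qed
  then show ?thesis
    using that dense_chain_mono D by metis
qed

definition grid_index :: "nat \<Rightarrow> real \<Rightarrow> nat" where
  "grid_index N t = min (N - 1) (nat \<lfloor>t * real N\<rfloor>)"

lemma grid_index_less: "N > 0 \<Longrightarrow> grid_index N t < N"
  unfolding grid_index_def by simp

lemma grid_index_of_nat_divide: "i < N \<Longrightarrow> grid_index N (real i / real N) = i"
  unfolding grid_index_def by simp

lemma grid_index_mult_div:
  assumes "0 \<le> t" "N > 0" "L > 0"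
  shows "grid_index (N * L) t div L = grid_index N t"
proof -
  define a where "a = nat \<lfloor>t * real N\<rfloor>"
  define b where "b = nat \<lfloor>t * real (N * L)\<rfloor>"
  have "t * real N \<ge> 0" "t * real (N * L) \<ge> 0" using assms by auto
  then have a: "real a \<le> t * real N" "t * real N < real a + 1"
    and b: "real b \<le> t * real (N * L)" "t * real (N * L) < real b + 1"
    unfolding a_def b_def by linarith+
  have "real (a * L) \<le> t * real (N * L)"
    using mult_right_mono[OF a(1), of "real L"] by (simp add: mult.assoc)
  then have "a * L \<le> b" unfolding b_def by (rule le_nat_floor)
  have "t * real (N * L) < real (Suc a * L)"
    using mult_strict_right_mono[OF a(2), of "real L"] assms by (simp add: algebra_simps)
  then have "b < Suc a * L" using b(1) by linarith
  with \<open>a * L \<le> b\<close> have b_div: "b div L = a"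
    by (intro div_nat_eqI) (auto simp: mult.commute)
  have top_div: "(N * L - 1) div L = N - 1"
    using assms by (intro div_nat_eqI) (auto simp: algebra_simps diff_mult_distrib2)
  show ?thesis
  proof (cases "b \<le> N * L - 1")
    case True
    then have "a \<le> N - 1" using b_div top_div div_le_mono by metis
    then show ?thesis unfolding grid_index_def using True b_div a_def b_def by simp
  next
    case False
    then have "N * L div L \<le> b div L" by (intro div_le_mono) simp
    then have "N \<le> a" using b_div assms by simp
    then show ?thesis unfolding grid_index_def using False top_div a_def b_def by simp
  qed
qed

lemma grid_index_close:
  assumes "0 \<le> s" "0 \<le> t" "N > 0" "dist s t < 1 / real N"
  shows "grid_index N s = grid_index N t \<or> Suc (grid_index N s) = grid_index N t \<or>
    Suc (grid_index N t) = grid_index N s"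
proof -
  define A where "A = \<lfloor>s * real N\<rfloor>"
  define B where "B = \<lfloor>t * real N\<rfloor>"
  have "\<bar>s - t\<bar> * real N < 1" using assms by (simp add: dist_real_def field_simps)
  then have "\<bar>s * real N - t * real N\<bar> < 1"
    by (simp add: left_diff_distrib[symmetric] abs_mult)
  then have "A = B \<or> A = B + 1 \<or> B = A + 1" unfolding A_def B_def by linarith
  moreover have "A \<ge> 0" "B \<ge> 0" unfolding A_def B_def using assms by auto
  ultimately have "nat A = nat B \<or> nat A = Suc (nat B) \<or> nat B = Suc (nat A)" by auto
  then show ?thesis
    unfolding grid_index_def A_def[symmetric] B_def[symmetric] by (auto simp: min_def)
qed

definition chain_path :: "'a list \<Rightarrow> real \<Rightarrow> 'a" where
  "chain_path xs t = xs ! grid_index (length xs) t"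

lemma dense_chain_path:
  assumes "dense_chain X d xs"
  shows "\<And>t. chain_path xs t \<in> X"
    and "\<And>x. x \<in> X \<Longrightarrow> \<exists>t\<in>{0..1}. dist x (chain_path xs t) < d"
    and "\<And>s t. s \<in> {0..1} \<Longrightarrow> t \<in> {0..1} \<Longrightarrow> dist s t < 1 / real (length xs) \<Longrightarrow>
           dist (chain_path xs s) (chain_path xs t) < d"
proof -
  have "xs \<noteq> []" "set xs \<subseteq> X" and dense: "\<forall>x\<in>X. \<exists>y\<in>set xs. dist x y < d"
    and step: "\<And>i. Suc i < length xs \<Longrightarrow> dist (xs ! i) (xs ! Suc i) < d"
    using assms successively_nth by (auto simp: dense_chain_def d_chain_def)
  have "hd xs \<in> X" using \<open>xs \<noteq> []\<close> \<open>set xs \<subseteq> X\<close> by auto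
  then obtain y where "dist (hd xs) y < d" using dense by blast
  then have "d > 0" using zero_le_dist[of "hd xs" y] by linarith
  show "chain_path xs t \<in> X" for t
    using \<open>xs \<noteq> []\<close> \<open>set xs \<subseteq> X\<close> grid_index_less unfolding chain_path_def by auto
  show "\<exists>t\<in>{0..1}. dist x (chain_path xs t) < d" if "x \<in> X" for x
  proof -
    obtain y where "y \<in> set xs" "dist x y < d" using dense \<open>x \<in> X\<close> by blast
    then obtain i where "i < length xs" "dist x (xs ! i) < d" by (metis in_set_conv_nth)
    then show ?thesis
      by (intro bexI[of _ "real i / real (length xs)"])
        (simp_all add: chain_path_def grid_index_of_nat_divide divide_le_eq_1)
  qed
  show "dist (chain_path xs s) (chain_path xs t) < d"
    if "s \<in> {0..1}" "t \<in> {0..1}" "dist s t < 1 / real (length xs)" for s t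
    using grid_index_close[of s t "length xs"] grid_index_less[of "length xs"] that
      step[of "grid_index (length xs) s"] step[of "grid_index (length xs) t"] \<open>d > 0\<close> \<open>xs \<noteq> []\<close>
    unfolding chain_path_def by (auto simp: dist_commute)
qed

lemma blockwise_refines_chain_path:
  assumes "blockwise_refines e ys xs" "xs \<noteq> []" "t \<ge> 0"
  shows "dist (chain_path ys t) (chain_path xs t) < e"
proof -
  obtain L where "L \<ge> 1" "length ys = length xs * L"
    and L: "\<forall>j<length ys. dist (ys ! j) (xs ! (j div L)) < e"
    using assms(1) unfolding blockwise_refines_def by blast
  then have "grid_index (length ys) t < length ys"
    and "grid_index (length ys) t div L = grid_index (length xs) t"
    using grid_index_less grid_index_mult_div[OF \<open>t \<ge> 0\<close>] \<open>xs \<noteq> []\<close> by auto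
  then show ?thesis using L unfolding chain_path_def by metis
qed

lemma geometric_Cauchy_limit:
  fixes a :: "nat \<Rightarrow> 'a::metric_space"
  assumes X: "complete X" "\<And>n. a n \<in> X"
    and step: "\<And>n. dist (a (Suc n)) (a n) \<le> E / 2 ^ n"
  obtains l where "l \<in> X" "a \<longlonglongrightarrow> l" "\<And>n. dist l (a n) \<le> 2 * E / 2 ^ n"
proof -
  have tail: "dist (a (n + k)) (a n) \<le> 2 * E / 2 ^ n - 2 * E / 2 ^ (n + k)" for n k
  proof (induction k)
    case (Suc k)
    have "dist (a (n + Suc k)) (a n) \<le> dist (a (Suc (n + k))) (a (n + k)) + dist (a (n + k)) (a n)"
      by (simp add: dist_triangle)
    also have "\<dots> \<le> E / 2 ^ (n + k) + (2 * E / 2 ^ n - 2 * E / 2 ^ (n + k))"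
      using step[of "n + k"] Suc by simp
    also have "\<dots> = 2 * E / 2 ^ n - 2 * E / 2 ^ (n + Suc k)"
      by (simp add: field_simps)
    finally show ?case .
  qed simp
  have E: "E \<ge> 0"
    using order.trans[OF zero_le_dist step[of 0]] by simp
  have bound: "dist (a m) (a n) \<le> 2 * E / 2 ^ n" if "n \<le> m" for m n
  proof -
    obtain k where "m = n + k" using \<open>n \<le> m\<close> le_Suc_ex by blast
    moreover have "2 * E / 2 ^ (n + k) \<ge> 0" using E by simp
    ultimately show ?thesis using tail[of n k] by simp
  qed
  have small: "\<forall>\<^sub>F n in sequentially. 2 * E / 2 ^ n < e" if "e > 0" for e
    using order_tendstoD(2)[OF LIMSEQ_divide_realpow_zero[of 2 "2 * E"] that] by simp
  have "Cauchy a"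
  proof (rule metric_CauchyI)
    fix e :: real assume "e > 0"
    then obtain N where N: "2 * E / 2 ^ N < e / 2"
      using small[of "e / 2"] eventually_sequentially by fastforce
    have "dist (a m) (a n) < e" if "N \<le> m" "N \<le> n" for m n
      using dist_triangle2[of "a m" "a n" "a N"] bound[OF that(1)] bound[OF that(2)] N by linarith
    then show "\<exists>N. \<forall>m\<ge>N. \<forall>n\<ge>N. dist (a m) (a n) < e" by blast
  qed
  then obtain l where l: "l \<in> X" "a \<longlonglongrightarrow> l"
    using X unfolding complete_def by blast
  have "dist l (a n) \<le> 2 * E / 2 ^ n" for n
  proof (rule LIMSEQ_le_const2)
    show "(\<lambda>m. dist (a m) (a n)) \<longlonglongrightarrow> dist l (a n)"
      by (intro tendsto_intros l(2))
    show "\<exists>N. \<forall>m\<ge>N. dist (a m) (a n) \<le> 2 * E / 2 ^ n"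
      using bound by blast
  qed
  with l that show ?thesis by blast
qed

lemma continuous_surjection_from_approximations:
  fixes p :: "nat \<Rightarrow> 'a::metric_space \<Rightarrow> 'b::metric_space"
  assumes "compact S" "compact X"
    and into: "\<And>n t. t \<in> S \<Longrightarrow> p n t \<in> X"
    and step: "\<And>n t. t \<in> S \<Longrightarrow> dist (p (Suc n) t) (p n t) \<le> E / 2 ^ n"
    and osc: "\<And>n. \<exists>\<delta>>0. \<forall>s\<in>S. \<forall>t\<in>S. dist s t < \<delta> \<longrightarrow> dist (p n s) (p n t) \<le> E / 2 ^ n"
    and dense: "\<And>n x. x \<in> X \<Longrightarrow> \<exists>t\<in>S. dist x (p n t) \<le> E / 2 ^ n"
  shows "\<exists>P. continuous_on S P \<and> P ` S = X"
proof -
  have "\<exists>l. l \<in> X \<and> (\<forall>n. dist l (p n t) \<le> 2 * E / 2 ^ n)" if "t \<in> S" for t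
    using geometric_Cauchy_limit[OF compact_imp_complete[OF \<open>compact X\<close>], of "\<lambda>n. p n t" E]
      into step that by metis
  then obtain P where PX: "\<And>t. t \<in> S \<Longrightarrow> P t \<in> X"
    and P: "\<And>t n. t \<in> S \<Longrightarrow> dist (P t) (p n t) \<le> 2 * E / 2 ^ n"
    by metis
  have small: "\<exists>n. c * E / 2 ^ n < e" if "e > 0" for c e
    using order_tendstoD(2)[OF LIMSEQ_divide_realpow_zero[of 2 "c * E"] that]
    by (simp add: eventually_sequentially) blast
  have "continuous_on S P"
    unfolding continuous_on_iff
  proof (intro ballI allI impI)
    fix s e assume "s \<in> S" "e > (0::real)"
    obtain n where n: "5 * E / 2 ^ n < e" using small \<open>e > 0\<close> by blast
    obtain \<delta> where "\<delta> > 0" and \<delta>: "\<forall>s\<in>S. \<forall>t\<in>S. dist s t < \<delta> \<longrightarrow> dist (p n s) (p n t) \<le> E / 2 ^ n"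
      using osc by blast
    have "dist (P t) (P s) < e" if "t \<in> S" "dist t s < \<delta>" for t
    proof -
      have "dist (p n t) (p n s) \<le> E / 2 ^ n" using \<delta> that \<open>s \<in> S\<close> by blast
      then have "dist (P t) (P s) \<le> 2 * E / 2 ^ n + E / 2 ^ n + 2 * E / 2 ^ n"
        using dist_triangle[of "P t" "P s" "p n t"] dist_triangle[of "p n t" "P s" "p n s"]
          P[OF \<open>t \<in> S\<close>, of n] P[OF \<open>s \<in> S\<close>, of n]
        by (simp add: dist_commute)
      also have "\<dots> = 5 * E / 2 ^ n" by simp
      finally show ?thesis using n by linarith
    qed
    with \<open>\<delta> > 0\<close> show "\<exists>\<delta>>0. \<forall>t\<in>S. dist t s < \<delta> \<longrightarrow> dist (P t) (P s) < e" by blast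
  qed
  moreover have "X \<subseteq> P ` S"
  proof
    fix x assume "x \<in> X"
    have "\<exists>y\<in>P ` S. dist y x < e" if "e > 0" for e
    proof -
      obtain n where n: "3 * E / 2 ^ n < e" using small \<open>e > 0\<close> by blast
      obtain t where "t \<in> S" "dist x (p n t) \<le> E / 2 ^ n" using dense \<open>x \<in> X\<close> by blast
      then have "dist (P t) x \<le> 2 * E / 2 ^ n + E / 2 ^ n"
        using dist_triangle2[of "P t" x "p n t"] P[of t n] by simp
      also have "\<dots> = 3 * E / 2 ^ n" by simp
      finally have "dist (P t) x < e" using n by linarith
      with \<open>t \<in> S\<close> show ?thesis by blast
    qed
    moreover have "closed (P ` S)"
      by (intro compact_imp_closed compact_continuous_image \<open>continuous_on S P\<close> \<open>compact S\<close>)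
    ultimately show "x \<in> P ` S" using closed_approachable by blast
  qed
  ultimately show ?thesis using PX by blast
qed

lemma locally_connected_continuous_image_compact:
  fixes f :: "'a::t2_space \<Rightarrow> 'b::t2_space"
  assumes "continuous_on S f" "compact S" "locally connected S"
  shows "locally connected (f ` S)"
  using locally_connected_quotient_image[OF assms(3)
      Abstract_Topology_2.continuous_imp_quotient_map[OF assms(1) refl assms(2)]] .

theorem Hahn_Mazurkiewicz:
  fixes X :: "'a::metric_space set"
  assumes "compact X" "X \<noteq> {}" "connected X" "locally connected X"
  obtains f :: "real \<Rightarrow> 'a" where "continuous_on {0..1} f" "f ` {0..1} = X"
proof -
  obtain x0 where "x0 \<in> X" using \<open>X \<noteq> {}\<close> by blast
  obtain r where r: "\<And>y. y \<in> X \<Longrightarrow> dist x0 y \<le> r"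
    using compact_imp_bounded[OF \<open>compact X\<close>] unfolding bounded_any_center[of _ x0] by blast
  define E where "E = 2 * r + 1"
  have diam: "\<forall>x\<in>X. \<forall>y\<in>X. dist x y < E / 2 ^ 0"
    using r dist_triangle3[of _ _ x0] unfolding E_def by (smt (verit) power_0 div_by_1)
  then have "E > 0" using \<open>x0 \<in> X\<close> by (metis zero_le_dist order.strict_trans1 power_0 div_by_1)
  then obtain cs where cs: "\<And>n. dense_chain X (E / 2 ^ n) (cs n)"
    and refines: "\<And>n. blockwise_refines (E / 2 ^ n) (cs (Suc n)) (cs n)"
    using refining_dense_chains[of X x0 "\<lambda>n. E / 2 ^ n"] assms diam \<open>x0 \<in> X\<close> by auto
  note path = dense_chain_path[OF cs]
  have "\<exists>f. continuous_on {0..1::real} f \<and> f ` {0..1} = X"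
  proof (rule continuous_surjection_from_approximations[where p = "\<lambda>n. chain_path (cs n)"])
    show "dist (chain_path (cs (Suc n)) t) (chain_path (cs n) t) \<le> E / 2 ^ n"
      if "t \<in> {0..1}" for n t
      using blockwise_refines_chain_path[OF refines] cs that
      by (auto simp: dense_chain_def d_chain_def less_imp_le)
    show "\<exists>\<delta>>0. \<forall>s\<in>{0..1}. \<forall>t\<in>{0..1}. dist s t < \<delta> \<longrightarrow>
        dist (chain_path (cs n) s) (chain_path (cs n) t) \<le> E / 2 ^ n" for n
      using dense_chain_path(3)[OF cs[of n]] cs[of n]
      by (intro exI[of _ "1 / real (length (cs n))"])
        (auto simp: dense_chain_def d_chain_def less_imp_le)
    show "\<exists>t\<in>{0..1}. dist x (chain_path (cs n) t) \<le> E / 2 ^ n" if "x \<in> X" for n x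
      using path(2)[OF that] by (meson less_imp_le)
  qed (use path(1) \<open>compact X\<close> in auto)
  with that show ?thesis by blast
qed

corollary Hahn_Mazurkiewicz_iff:
  fixes X :: "'a::metric_space set"
  shows "(\<exists>g. continuous_on {0..1::real} g \<and> X = g ` {0..1}) \<longleftrightarrow>
    compact X \<and> X \<noteq> {} \<and> connected X \<and> locally connected X"
proof
  assume "\<exists>g. continuous_on {0..1::real} g \<and> X = g ` {0..1}"
  then show "compact X \<and> X \<noteq> {} \<and> connected X \<and> locally connected X"
    using locally_connected_continuous_image_compact[of "{0..1::real}"]
    by (auto simp: compact_continuous_image connected_continuous_image
        convex_imp_locally_connected)
next
  assume "compact X \<and> X \<noteq> {} \<and> connected X \<and> locally connected X"
  then show "\<exists>g. continuous_on {0..1::real} g \<and> X = g ` {0..1}"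
    using Hahn_Mazurkiewicz by metis
qed

theorem proposition6p1:
  fixes X :: "complex set"
  assumes "compact X"
  shows "((\<exists>f\<in>F0. X = f ` {0..1}) \<longleftrightarrow>
          (0 \<in> X \<and> (\<exists>\<alpha>::real. symmetric_wrt_line X \<alpha>) \<and>
           (\<exists>f. continuous_on {0..1::real} f \<and> X = f ` {0..1})))
       \<and> ((0 \<in> X \<and> (\<exists>\<alpha>::real. symmetric_wrt_line X \<alpha>) \<and>
           (\<exists>f. continuous_on {0..1::real} f \<and> X = f ` {0..1}))
          \<longleftrightarrow>
          (0 \<in> X \<and> (\<exists>\<alpha>::real. symmetric_wrt_line X \<alpha>) \<and>
           connected X \<and> locally connected X))"
  unfolding F0_image_iff Hahn_Mazurkiewicz_iff using assms by blast

end
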